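(* Let $L$ denote the problem of finding both the largest and the smallest of $n$ elements by pairwise comparisons. Then for every integer $k\ge 0$, $D_k(L,n)=\min\{n+k-1,\ \lceil 3n/2\rceil-2\}$.
   Context: Problem $L$ on $n$ elements: the input is an assignment of $n$ distinct real numbers $a_1,\dots,a_n$ to $n$ labeled elements; a query is a pair $\{i,j\}$ and its answer tells whether $a_i<a_j$; the goal is to determine which element is the largest and which is the smallest. $D_k(L,n)$ is defined by the following game between a Questioner and an Adversary. The Adversary chooses an input (the current input). The Questioner, who always knows the current input, asks queries one after another; each query is answered according to the current input. Between queries the Adversary may replace the current input by any other input consistent with all answers given so far, but at most $k$ times in total. The game ends as soon as the answers given determine both the largest and the smallest element. $D_k(L,n)$ is the number of queries asked when the Questioner minimizes and the Adversary maximizes this number. *)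

theory Defs
  imports Complex_Main
begin

text \<open>Elements are 0..n-1. An input is an injective assignment of reals to them
  (normalised to 0 outside {..<n} so that inputs are determined by their values on
  the elements). An answer to a query is recorded as an ordered pair (i,j) meaning a i < a j.\<close>

definition inputs :: "nat \<Rightarrow> (nat \<Rightarrow> real) set" where
  "inputs n = {a. inj_on a {..<n} \<and> (\<forall>i\<ge>n. a i = 0)}"

definition consistent :: "(nat \<Rightarrow> real) \<Rightarrow> (nat \<times> nat) set \<Rightarrow> bool" where
  "consistent a A \<longleftrightarrow> (\<forall>(i,j)\<in>A. a i < a j)"

definition determined :: "nat \<Rightarrow> (nat \<times> nat) set \<Rightarrow> bool" where
  "determined n A \<longleftrightarrow> (\<exists>M<n. \<exists>m<n. \<forall>a\<in>inputs n. consistent a A \<longrightarrow>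
      (\<forall>i<n. a i \<le> a M) \<and> (\<forall>i<n. a m \<le> a i))"

definition answer :: "(nat \<Rightarrow> real) \<Rightarrow> nat \<Rightarrow> nat \<Rightarrow> nat \<times> nat" where
  "answer a i j = (if a i < a j then (i, j) else (j, i))"

text \<open>qwin m n A a k: in the position where answers A have been given, the current
  input is a, the Adversary has k changes left and the Questioner is to ask,
  the Questioner can guarantee that the game ends after at most m further queries.
  After each answer the Adversary may replace the current input by a different
  consistent one, using up one change.\<close>
primrec qwin :: "nat \<Rightarrow> nat \<Rightarrow> (nat \<times> nat) set \<Rightarrow> (nat \<Rightarrow> real) \<Rightarrow> nat \<Rightarrow> bool" where
  "qwin 0 n A a k \<longleftrightarrow> determined n A"
| "qwin (Suc m) n A a k \<longleftrightarrow> determined n A \<or>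
     (\<exists>i<n. \<exists>j<n. i \<noteq> j \<and>
        (let A' = insert (answer a i j) A in
           qwin m n A' a k \<and>
           (\<forall>b\<in>inputs n. 0 < k \<and> b \<noteq> a \<and> consistent b A' \<longrightarrow> qwin m n A' b (k - 1))))"

definition D :: "nat \<Rightarrow> nat \<Rightarrow> nat" where
  "D k n = (LEAST m. \<forall>a\<in>inputs n. qwin m n {} a k)"

end

theory Submission
  imports Defs
begin

(* Let U be the elements that have not lost a comparison yet, L those that have not won one, and
   F the untouched elements, which lie in both. The answers determine the maximum and the minimum
   exactly when |U| = |L| = 1, and all bounds come from potential functions.

   ceil(3n/2) - 2 queries suffice: comparing two elements of F, or else two of U or two of L,
   lowers |U| + |L| - floor(|F|/2) whatever the answer, and this potential starts at
   n + ceil(n/2) and never drops below 2.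

   n + k - 1 queries suffice: call the current input separated if some element of F lies above
   all of L - U and below all of U - L. The Questioner can always ask a query whose answer lowers
   |U union L| + [separated] for the current input without raising it for any other input, so each
   change of input costs at most one extra query.

   Neither bound can be beaten: the Adversary keeps the input sandwiched (L - U below all of U,
   U - L above all of L), spending a change whenever an answer breaks this. Then
   |U| + |L| - |F| - 2 + min(k + 1, ceil(|F|/2)) drops by at most one per query. Once no change
   is left the input stays fixed, and for the best threshold v the number of elements of U
   above v plus those of L below v drops by at most one per query. *)

lemma finite_obtain_arg_min:
  fixes f :: "'a \<Rightarrow> 'b::linorder"
  assumes "finite S" "S \<noteq> {}"
  obtains x where "x \<in> S" "\<And>y. y \<in> S \<Longrightarrow> f x \<le> f y"
proof -
  have "Min (f ` S) \<in> f ` S" using assms by simp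
  then obtain x where "x \<in> S" "f x = Min (f ` S)" by auto
  moreover have "Min (f ` S) \<le> f y" if "y \<in> S" for y
    using assms that by (intro Min_le) auto
  ultimately show thesis using that by simp
qed

lemma finite_obtain_arg_max:
  fixes f :: "'a \<Rightarrow> 'b::linorder"
  assumes "finite S" "S \<noteq> {}"
  obtains x where "x \<in> S" "\<And>y. y \<in> S \<Longrightarrow> f y \<le> f x"
proof -
  have "Max (f ` S) \<in> f ` S" using assms by simp
  then obtain x where "x \<in> S" "f x = Max (f ` S)" by auto
  moreover have "f y \<le> Max (f ` S)" if "y \<in> S" for y
    using assms that by (intro Max_ge) auto
  ultimately show thesis using that by simp
qed

lemma card_ge_2_obtain:
  assumes "2 \<le> card S"
  obtains x y where "x \<in> S" "y \<in> S" "x \<noteq> y"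
proof -
  have "finite S" using assms by (intro card_ge_0_finite) simp
  with assms card_le_Suc0_iff_eq[of S] that show thesis by fastforce
qed

lemma int_card_Diff_singleton:
  assumes "finite S"
  shows "int (card (S - {x})) = int (card S) - of_bool (x \<in> S)"
proof (cases "x \<in> S")
  case True
  with assms have "0 < card S" by (auto simp: card_gt_0_iff)
  with True show ?thesis by (simp add: card_Diff_singleton of_nat_diff)
qed simp

lemma card_le_card_Diff_singleton_Suc: "card S \<le> Suc (card (S - {x}))"
proof (cases "finite S \<and> x \<in> S")
  case True
  then show ?thesis by (simp add: card_Suc_Diff1)
qed auto

definition max_cands :: "nat \<Rightarrow> (nat \<times> nat) set \<Rightarrow> nat set" where
  "max_cands n A = {x. x < n \<and> (\<forall>y<n. (x, y) \<notin> A)}"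

definition min_cands :: "nat \<Rightarrow> (nat \<times> nat) set \<Rightarrow> nat set" where
  "min_cands n A = {y. y < n \<and> (\<forall>x<n. (x, y) \<notin> A)}"

definition admissible :: "nat \<Rightarrow> (nat \<times> nat) set \<Rightarrow> (nat \<Rightarrow> real) \<Rightarrow> bool" where
  "admissible n A a \<longleftrightarrow> a \<in> inputs n \<and> consistent a A \<and> A \<subseteq> {..<n} \<times> {..<n}"

lemma max_cands_subset: "max_cands n A \<subseteq> {..<n}"
  unfolding max_cands_def by auto

lemma min_cands_subset: "min_cands n A \<subseteq> {..<n}"
  unfolding min_cands_def by auto

lemma finite_max_cands [simp]: "finite (max_cands n A)"
  using finite_subset[OF max_cands_subset] by blast

lemma finite_min_cands [simp]: "finite (min_cands n A)"
  using finite_subset[OF min_cands_subset] by blast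

lemma max_cands_empty [simp]: "max_cands n {} = {..<n}"
  unfolding max_cands_def by auto

lemma min_cands_empty [simp]: "min_cands n {} = {..<n}"
  unfolding min_cands_def by auto

lemma max_cands_insert: "j < n \<Longrightarrow> max_cands n (insert (i, j) A) = max_cands n A - {i}"
  unfolding max_cands_def by auto

lemma min_cands_insert: "i < n \<Longrightarrow> min_cands n (insert (i, j) A) = min_cands n A - {j}"
  unfolding min_cands_def by auto

lemma consistent_empty [simp]: "consistent a {}"
  unfolding consistent_def by simp

lemma consistent_insert [simp]: "consistent a (insert (i, j) A) \<longleftrightarrow> a i < a j \<and> consistent a A"
  unfolding consistent_def by auto

lemma consistent_mono:
  assumes "consistent a A" "A \<subseteq> {..<n} \<times> {..<n}"
    and "\<And>x. x < n \<Longrightarrow> x \<notin> max_cands n A \<Longrightarrow> b x \<le> a x"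
    and "\<And>y. y < n \<Longrightarrow> y \<notin> min_cands n A \<Longrightarrow> a y \<le> b y"
  shows "consistent b A"
  unfolding consistent_def
proof clarify
  fix x y assume xy: "(x, y) \<in> A"
  with assms(2) have "x < n" "y < n" by auto
  with xy have "x \<notin> max_cands n A" "y \<notin> min_cands n A"
    unfolding max_cands_def min_cands_def by auto
  with xy assms \<open>x < n\<close> \<open>y < n\<close> show "b x < b y"
    unfolding consistent_def by fastforce
qed

lemma inj_on_input: "a \<in> inputs n \<Longrightarrow> inj_on a {..<n}"
  unfolding inputs_def by simp

lemma inputs_nonempty: "inputs n \<noteq> {}"
proof -
  have "(\<lambda>i. if i < n then real i else 0) \<in> inputs n"
    unfolding inputs_def inj_on_def by simp
  then show ?thesis by blast
qed

lemma answer_correct: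
  assumes "a \<in> inputs n" "i < n" "j < n" "i \<noteq> j"
  obtains x y where "answer a i j = (x, y)" "x < n" "y < n" "a x < a y"
proof -
  have "a i \<noteq> a j"
    using inj_on_input[OF assms(1)] assms(2-4) by (auto dest: inj_onD)
  then show thesis
    using that assms(2,3) unfolding answer_def by (cases "a i < a j") auto
qed

lemma answer_less: "a i < a j \<Longrightarrow> answer a i j = (i, j)"
  unfolding answer_def by simp

lemma answer_cases: "answer a i j = (i, j) \<or> answer a i j = (j, i)"
  unfolding answer_def by simp

lemma admissible_insert:
  "admissible n A a \<Longrightarrow> x < n \<Longrightarrow> y < n \<Longrightarrow> a x < a y \<Longrightarrow> admissible n (insert (x, y) A) a"
  unfolding admissible_def by auto

lemma admissible_insert_answer:
  assumes "admissible n A a" "i < n" "j < n" "i \<noteq> j"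
  shows "admissible n (insert (answer a i j) A) a"
proof -
  from assms(1) have "a \<in> inputs n" unfolding admissible_def by simp
  from answer_correct[OF this assms(2-4)] obtain x y
    where "answer a i j = (x, y)" "x < n" "y < n" "a x < a y" .
  with admissible_insert[OF assms(1)] show ?thesis by simp
qed

lemma admissible_change:
  "admissible n A a \<Longrightarrow> b \<in> inputs n \<Longrightarrow> consistent b A \<Longrightarrow> admissible n A b"
  unfolding admissible_def by simp

lemma input_max_in_max_cands:
  "consistent a A \<Longrightarrow> x < n \<Longrightarrow> (\<And>i. i < n \<Longrightarrow> a i \<le> a x) \<Longrightarrow> x \<in> max_cands n A"
  unfolding max_cands_def consistent_def by force

lemma input_min_in_min_cands:
  "consistent a A \<Longrightarrow> x < n \<Longrightarrow> (\<And>i. i < n \<Longrightarrow> a x \<le> a i) \<Longrightarrow> x \<in> min_cands n A"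
  unfolding min_cands_def consistent_def by force

lemma max_cands_nonempty: "0 < n \<Longrightarrow> consistent a A \<Longrightarrow> max_cands n A \<noteq> {}"
  using finite_obtain_arg_max[of "{..<n}" a] input_max_in_max_cands[of a A _ n] by auto

lemma min_cands_nonempty: "0 < n \<Longrightarrow> consistent a A \<Longrightarrow> min_cands n A \<noteq> {}"
  using finite_obtain_arg_min[of "{..<n}" a] input_min_in_min_cands[of a A _ n] by auto

lemma inputs_shift_by_levels:
  fixes g :: "nat \<Rightarrow> int"
  assumes "a \<in> inputs n"
  obtains C :: real where "0 \<le> C" "(\<lambda>x. if x < n then a x + C * of_int (g x) else 0) \<in> inputs n"
    "\<And>x y. x < n \<Longrightarrow> y < n \<Longrightarrow> g x < g y \<Longrightarrow> a x + C * of_int (g x) < a y + C * of_int (g y)"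
proof -
  define C where "C = 2 * (\<Sum>i<n. \<bar>a i\<bar>) + 1"
  have gap: "a x - a y < C" if "x < n" "y < n" for x y
  proof -
    have "\<bar>a x\<bar> \<le> (\<Sum>i<n. \<bar>a i\<bar>)" "\<bar>a y\<bar> \<le> (\<Sum>i<n. \<bar>a i\<bar>)"
      using that by (intro member_le_sum; simp)+
    then show ?thesis unfolding C_def by linarith
  qed
  have "0 \<le> C" unfolding C_def by (simp add: sum_nonneg)
  have level: "a x + C * of_int (g x) < a y + C * of_int (g y)" if "x < n" "y < n" "g x < g y" for x y
  proof -
    have "C \<le> C * of_int (g y - g x)"
      using that(3) \<open>0 \<le> C\<close> by (simp add: mult_le_cancel_left1 flip: of_int_diff)
    with gap[OF that(1,2)] show ?thesis by (simp add: right_diff_distrib)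
  qed
  have "inj_on (\<lambda>x. a x + C * of_int (g x)) {..<n}"
  proof (rule inj_onI)
    fix x y assume xy: "x \<in> {..<n}" "y \<in> {..<n}" "a x + C * of_int (g x) = a y + C * of_int (g y)"
    with level[of x y] level[of y x] have "g x = g y" by force
    with xy have "a x = a y" by simp
    with xy(1,2) inj_on_input[OF assms] show "x = y" by (auto dest: inj_onD)
  qed
  then have "(\<lambda>x. if x < n then a x + C * of_int (g x) else 0) \<in> inputs n"
    unfolding inputs_def by (simp add: inj_on_def)
  with that \<open>0 \<le> C\<close> level show thesis by blast
qed

lemma max_cand_can_be_max:
  assumes "admissible n A a" "u \<in> max_cands n A"
  obtains b where "b \<in> inputs n" "consistent b A" "\<And>i. i < n \<Longrightarrow> i \<noteq> u \<Longrightarrow> b i < b u"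
proof -
  have a: "a \<in> inputs n" "consistent a A" "A \<subseteq> {..<n} \<times> {..<n}"
    using assms(1) unfolding admissible_def by auto
  have "u < n" using assms(2) max_cands_subset by blast
  define g :: "nat \<Rightarrow> int" where "g x = of_bool (x = u)" for x
  obtain C :: real where C: "0 \<le> C" "(\<lambda>x. if x < n then a x + C * of_int (g x) else 0) \<in> inputs n"
    "\<And>x y. x < n \<Longrightarrow> y < n \<Longrightarrow> g x < g y \<Longrightarrow> a x + C * of_int (g x) < a y + C * of_int (g y)"
    using inputs_shift_by_levels[OF a(1)] by blast
  let ?b = "\<lambda>x. if x < n then a x + C * of_int (g x) else 0"
  have "consistent ?b A"
    by (rule consistent_mono[OF a(2,3)]) (use C(1) assms(2) in \<open>auto simp: g_def\<close>)
  moreover have "?b i < ?b u" if "i < n" "i \<noteq> u" for i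
    using C(3)[of i u] that \<open>u < n\<close> unfolding g_def by simp
  ultimately show thesis using that C(2) by blast
qed

lemma min_cand_can_be_min:
  assumes "admissible n A a" "u \<in> min_cands n A"
  obtains b where "b \<in> inputs n" "consistent b A" "\<And>i. i < n \<Longrightarrow> i \<noteq> u \<Longrightarrow> b u < b i"
proof -
  have a: "a \<in> inputs n" "consistent a A" "A \<subseteq> {..<n} \<times> {..<n}"
    using assms(1) unfolding admissible_def by auto
  have "u < n" using assms(2) min_cands_subset by blast
  define g :: "nat \<Rightarrow> int" where "g x = - of_bool (x = u)" for x
  obtain C :: real where C: "0 \<le> C" "(\<lambda>x. if x < n then a x + C * of_int (g x) else 0) \<in> inputs n"
    "\<And>x y. x < n \<Longrightarrow> y < n \<Longrightarrow> g x < g y \<Longrightarrow> a x + C * of_int (g x) < a y + C * of_int (g y)"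
    using inputs_shift_by_levels[OF a(1)] by blast
  let ?b = "\<lambda>x. if x < n then a x + C * of_int (g x) else 0"
  have "consistent ?b A"
    by (rule consistent_mono[OF a(2,3)]) (use C(1) assms(2) in \<open>auto simp: g_def\<close>)
  moreover have "?b u < ?b i" if "i < n" "i \<noteq> u" for i
    using C(3)[of u i] that \<open>u < n\<close> unfolding g_def by simp
  ultimately show thesis using that C(2) by blast
qed

lemma single_cands_if_determined:
  assumes "0 < n" "admissible n A a" "determined n A"
  shows "card (max_cands n A) = 1" "card (min_cands n A) = 1"
proof -
  obtain M m where "M < n" "m < n" and Mm: "\<And>b i. b \<in> inputs n \<Longrightarrow> consistent b A \<Longrightarrow> i < n \<Longrightarrow>
      b i \<le> b M \<and> b m \<le> b i"
    using assms(3) unfolding determined_def by blast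
  have "max_cands n A \<subseteq> {M}"
  proof
    fix u assume u: "u \<in> max_cands n A"
    obtain b where b: "b \<in> inputs n" "consistent b A" "\<And>i. i < n \<Longrightarrow> i \<noteq> u \<Longrightarrow> b i < b u"
      using max_cand_can_be_max[OF assms(2) u] by blast
    have "u < n" using u max_cands_subset by blast
    with Mm[OF b(1,2)] have "b u \<le> b M" by blast
    with b(3)[OF \<open>M < n\<close>] show "u \<in> {M}" by force
  qed
  moreover have "min_cands n A \<subseteq> {m}"
  proof
    fix u assume u: "u \<in> min_cands n A"
    obtain b where b: "b \<in> inputs n" "consistent b A" "\<And>i. i < n \<Longrightarrow> i \<noteq> u \<Longrightarrow> b u < b i"
      using min_cand_can_be_min[OF assms(2) u] by blast
    have "u < n" using u min_cands_subset by blast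
    with Mm[OF b(1,2)] have "b m \<le> b u" by blast
    with b(3)[OF \<open>m < n\<close>] show "u \<in> {m}" by force
  qed
  moreover have "max_cands n A \<noteq> {}" "min_cands n A \<noteq> {}"
    using assms max_cands_nonempty min_cands_nonempty unfolding admissible_def by auto
  ultimately have "max_cands n A = {M}" "min_cands n A = {m}" by blast+
  then show "card (max_cands n A) = 1" "card (min_cands n A) = 1" by simp_all
qed

lemma determined_if_single_cands:
  assumes "0 < n" "card (max_cands n A) = 1" "card (min_cands n A) = 1"
  shows "determined n A"
proof -
  obtain M m where M: "max_cands n A = {M}" and m: "min_cands n A = {m}"
    using assms(2,3) by (auto simp: card_1_singleton_iff)
  have "M < n" "m < n"
    using M m max_cands_subset[of n A] min_cands_subset[of n A] by auto
  moreover have "b i \<le> b M \<and> b m \<le> b i"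
    if b: "b \<in> inputs n" "consistent b A" and "i < n" for b i
  proof -
    obtain x where x: "x < n" "\<And>i. i < n \<Longrightarrow> b i \<le> b x"
      using finite_obtain_arg_max[of "{..<n}" b] assms(1) by auto
    obtain y where y: "y < n" "\<And>i. i < n \<Longrightarrow> b y \<le> b i"
      using finite_obtain_arg_min[of "{..<n}" b] assms(1) by auto
    have "x = M" using input_max_in_max_cands[OF b(2) x] M by simp
    moreover have "y = m" using input_min_in_min_cands[OF b(2) y] m by simp
    ultimately show ?thesis using x(2) y(2) \<open>i < n\<close> by simp
  qed
  ultimately show "determined n A" unfolding determined_def by blast
qed

lemma qwin_Suc_iff:
  "qwin (Suc m) n A a k \<longleftrightarrow> determined n A \<or>
     (\<exists>i<n. \<exists>j<n. i \<noteq> j \<and> qwin m n (insert (answer a i j) A) a k \<and>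
        (\<forall>b\<in>inputs n. 0 < k \<and> b \<noteq> a \<and> consistent b (insert (answer a i j) A) \<longrightarrow>
           qwin m n (insert (answer a i j) A) b (k - 1)))"
  by (simp add: Let_def)

lemma qwin_by_potential:
  fixes \<Phi> :: "(nat \<times> nat) set \<Rightarrow> (nat \<Rightarrow> real) \<Rightarrow> nat \<Rightarrow> int"
  assumes ge_2: "\<And>A a k. admissible n A a \<Longrightarrow> 2 \<le> \<Phi> A a k"
    and progress: "\<And>A a k. admissible n A a \<Longrightarrow> \<not> determined n A \<Longrightarrow>
      \<exists>i<n. \<exists>j<n. i \<noteq> j \<and> \<Phi> (insert (answer a i j) A) a k < \<Phi> A a k \<and>
        (\<forall>b. 0 < k \<longrightarrow> \<Phi> (insert (answer a i j) A) b (k - 1) < \<Phi> A a k)"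
  shows "admissible n A a \<Longrightarrow> \<Phi> A a k \<le> int m + 2 \<Longrightarrow> qwin m n A a k"
proof (induction m arbitrary: A a k)
  case 0
  show ?case
  proof (rule ccontr)
    assume "\<not> qwin 0 n A a k"
    then obtain i j where ij: "i < n" "j < n" "i \<noteq> j"
      and less: "\<Phi> (insert (answer a i j) A) a k < \<Phi> A a k"
      using progress[of A a k] 0(1) by auto
    with ge_2[OF admissible_insert_answer[OF 0(1) ij], of k] 0(2) show False by linarith
  qed
next
  case (Suc m)
  show ?case
  proof (cases "determined n A")
    case False
    then obtain i j where ij: "i < n" "j < n" "i \<noteq> j"
      and keep: "\<Phi> (insert (answer a i j) A) a k < \<Phi> A a k"
      and switch: "\<And>b. 0 < k \<Longrightarrow> \<Phi> (insert (answer a i j) A) b (k - 1) < \<Phi> A a k"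
      using progress[of A a k] Suc.prems(1) by blast
    have adm: "admissible n (insert (answer a i j) A) a"
      using admissible_insert_answer[OF Suc.prems(1) ij] .
    have "qwin m n (insert (answer a i j) A) a k"
      using Suc.IH[OF adm] keep Suc.prems(2) by simp
    moreover have "qwin m n (insert (answer a i j) A) b (k - 1)"
      if "b \<in> inputs n" "0 < k" "consistent b (insert (answer a i j) A)" for b
    proof -
      have "\<Phi> (insert (answer a i j) A) b (k - 1) \<le> int m + 2"
        using switch[OF that(2), of b] Suc.prems(2) by simp
      then show ?thesis using Suc.IH[OF admissible_change[OF adm that(1,3)]] by blast
    qed
    ultimately show ?thesis using ij unfolding qwin_Suc_iff by blast
  qed simp
qed

lemma not_qwin_by_potential:
  fixes \<Psi> :: "(nat \<times> nat) set \<Rightarrow> (nat \<Rightarrow> real) \<Rightarrow> nat \<Rightarrow> int"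
  assumes determined: "\<And>A a k. P A a k \<Longrightarrow> admissible n A a \<Longrightarrow> determined n A \<Longrightarrow> \<Psi> A a k \<le> 0"
    and response: "\<And>A a k x y. P A a k \<Longrightarrow> admissible n A a \<Longrightarrow> x < n \<Longrightarrow> y < n \<Longrightarrow> a x < a y \<Longrightarrow>
      P (insert (x, y) A) a k \<and> \<Psi> A a k \<le> \<Psi> (insert (x, y) A) a k + 1 \<or>
      0 < k \<and> (\<exists>b\<in>inputs n. b \<noteq> a \<and> consistent b (insert (x, y) A) \<and>
        P (insert (x, y) A) b (k - 1) \<and> \<Psi> A a k \<le> \<Psi> (insert (x, y) A) b (k - 1) + 1)"
  shows "P A a k \<Longrightarrow> admissible n A a \<Longrightarrow> int m < \<Psi> A a k \<Longrightarrow> \<not> qwin m n A a k"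
proof (induction m arbitrary: A a k)
  case 0
  then show ?case using determined by fastforce
next
  case (Suc m)
  have "\<not> determined n A" using Suc.prems determined by fastforce
  show ?case
  proof
    assume "qwin (Suc m) n A a k"
    with \<open>\<not> determined n A\<close> obtain i j where ij: "i < n" "j < n" "i \<noteq> j"
      and keep: "qwin m n (insert (answer a i j) A) a k"
      and switch: "\<And>b. b \<in> inputs n \<Longrightarrow> 0 < k \<Longrightarrow> b \<noteq> a \<Longrightarrow> consistent b (insert (answer a i j) A) \<Longrightarrow>
        qwin m n (insert (answer a i j) A) b (k - 1)"
      unfolding qwin_Suc_iff by blast
    have "a \<in> inputs n" using Suc.prems(2) unfolding admissible_def by simp
    from answer_correct[OF this ij] obtain x y
      where xy: "answer a i j = (x, y)" "x < n" "y < n" "a x < a y" .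
    have adm: "admissible n (insert (x, y) A) a"
      using admissible_insert[OF Suc.prems(2) xy(2-4)] .
    from response[OF Suc.prems(1,2) xy(2-4)] show False
    proof (elim disjE conjE bexE)
      assume "P (insert (x, y) A) a k" "\<Psi> A a k \<le> \<Psi> (insert (x, y) A) a k + 1"
      with Suc.IH[OF _ adm] Suc.prems(3) keep xy(1) show False by simp
    next
      fix b assume b: "0 < k" "b \<in> inputs n" "b \<noteq> a" "consistent b (insert (x, y) A)"
        "P (insert (x, y) A) b (k - 1)" "\<Psi> A a k \<le> \<Psi> (insert (x, y) A) b (k - 1) + 1"
      have "qwin m n (insert (x, y) A) b (k - 1)" using switch[of b] b xy(1) by simp
      with Suc.IH[OF b(5) admissible_change[OF adm b(2,4)]] Suc.prems(3) b(6) show False by simp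
    qed
  qed
qed

lemma card_cands_insert:
  assumes "x < n" "y < n" "x \<noteq> y"
  shows "int (card (max_cands n (insert (x, y) A))) = int (card (max_cands n A)) - of_bool (x \<in> max_cands n A)"
    and "int (card (min_cands n (insert (x, y) A))) = int (card (min_cands n A)) - of_bool (y \<in> min_cands n A)"
    and "int (card (max_cands n (insert (x, y) A) \<inter> min_cands n (insert (x, y) A))) =
      int (card (max_cands n A \<inter> min_cands n A)) - of_bool (x \<in> max_cands n A \<inter> min_cands n A)
        - of_bool (y \<in> max_cands n A \<inter> min_cands n A)"
proof -
  have "max_cands n (insert (x, y) A) \<inter> min_cands n (insert (x, y) A) =
      (max_cands n A \<inter> min_cands n A - {x}) - {y}"
    using max_cands_insert[OF assms(2)] min_cands_insert[OF assms(1)] by auto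
  then show "int (card (max_cands n (insert (x, y) A) \<inter> min_cands n (insert (x, y) A))) =
      int (card (max_cands n A \<inter> min_cands n A)) - of_bool (x \<in> max_cands n A \<inter> min_cands n A)
        - of_bool (y \<in> max_cands n A \<inter> min_cands n A)"
    using assms(3) by (simp add: int_card_Diff_singleton)
qed (simp_all add: max_cands_insert min_cands_insert assms int_card_Diff_singleton)

definition pair_potential :: "nat \<Rightarrow> (nat \<times> nat) set \<Rightarrow> int" where
  "pair_potential n A = int (card (max_cands n A)) + int (card (min_cands n A))
     - int (card (max_cands n A \<inter> min_cands n A)) div 2"

lemma pair_potential_ge_2:
  assumes "0 < n" "admissible n A a"
  shows "2 \<le> pair_potential n A"
proof -
  have "max_cands n A \<noteq> {}" "min_cands n A \<noteq> {}"
    using assms max_cands_nonempty min_cands_nonempty unfolding admissible_def by auto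
  then have "1 \<le> card (max_cands n A)" "1 \<le> card (min_cands n A)"
    by (simp_all add: Suc_le_eq card_gt_0_iff)
  moreover have "card (max_cands n A \<inter> min_cands n A) \<le> card (max_cands n A)"
    by (intro card_mono) auto
  ultimately show ?thesis unfolding pair_potential_def by linarith
qed

lemma pair_potential_insert_less:
  assumes "x < n" "y < n" "x \<noteq> y"
    and "x \<in> max_cands n A \<inter> min_cands n A \<and> y \<in> max_cands n A \<inter> min_cands n A \<or>
      card (max_cands n A \<inter> min_cands n A) \<le> 1 \<and> (x \<in> max_cands n A \<or> y \<in> min_cands n A)"
  shows "pair_potential n (insert (x, y) A) < pair_potential n A"
  using assms(4)
proof
  assume "x \<in> max_cands n A \<inter> min_cands n A \<and> y \<in> max_cands n A \<inter> min_cands n A"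
  then show ?thesis
    unfolding pair_potential_def card_cands_insert[OF assms(1-3)] by simp
next
  let ?F = "max_cands n A \<inter> min_cands n A"
    and ?F' = "max_cands n (insert (x, y) A) \<inter> min_cands n (insert (x, y) A)"
  assume *: "card ?F \<le> 1 \<and> (x \<in> max_cands n A \<or> y \<in> min_cands n A)"
  have "?F' \<subseteq> ?F"
    using max_cands_insert[OF assms(2)] min_cands_insert[OF assms(1)] by auto
  then have "card ?F' \<le> 1" using * card_mono[of ?F ?F'] by simp
  with * have "int (card ?F) div 2 = 0" "int (card ?F') div 2 = 0" by simp_all
  with * show ?thesis
    unfolding pair_potential_def card_cands_insert(1,2)[OF assms(1-3)] by auto
qed

lemma not_determined_card_cands:
  assumes "0 < n" "admissible n A a" "\<not> determined n A"
  shows "2 \<le> card (max_cands n A) \<or> 2 \<le> card (min_cands n A)"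
proof -
  have "max_cands n A \<noteq> {}" "min_cands n A \<noteq> {}"
    using assms max_cands_nonempty min_cands_nonempty unfolding admissible_def by auto
  then have "card (max_cands n A) \<noteq> 0" "card (min_cands n A) \<noteq> 0" by simp_all
  moreover have "\<not> (card (max_cands n A) = 1 \<and> card (min_cands n A) = 1)"
    using determined_if_single_cands[OF assms(1)] assms(3) by blast
  ultimately show ?thesis by presburger
qed

lemma pair_potential_progress:
  assumes "0 < n" "admissible n A a" "\<not> determined n A"
  obtains i j where "i < n" "j < n" "i \<noteq> j"
    "pair_potential n (insert (i, j) A) < pair_potential n A"
    "pair_potential n (insert (j, i) A) < pair_potential n A"
proof -
  let ?U = "max_cands n A" and ?L = "min_cands n A"
  have "card (?U \<inter> ?L) \<le> 1 \<or> 2 \<le> card (?U \<inter> ?L)" by linarith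
  moreover note not_determined_card_cands[OF assms]
  ultimately obtain S where "S = ?U \<inter> ?L \<or> S = ?U \<and> card (?U \<inter> ?L) \<le> 1 \<or> S = ?L \<and> card (?U \<inter> ?L) \<le> 1"
    and "2 \<le> card S" by blast
  then obtain i j where ij: "i \<in> S" "j \<in> S" "i \<noteq> j" and "S \<subseteq> {..<n}"
    "i \<in> ?U \<inter> ?L \<and> j \<in> ?U \<inter> ?L \<or> card (?U \<inter> ?L) \<le> 1 \<and> (i \<in> ?U \<and> j \<in> ?U \<or> i \<in> ?L \<and> j \<in> ?L)"
    using max_cands_subset min_cands_subset by (elim card_ge_2_obtain) blast
  with that show thesis by (blast intro: pair_potential_insert_less)
qed

lemma ceiling_three_halves: "\<lceil>3 * real n / 2\<rceil> = int n + int ((n + 1) div 2)"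
proof -
  have "\<lceil>3 * real n / 2\<rceil> = - ((- (3 * int n)) div 2)"
    using floor_divide_of_int_eq[of "- (3 * int n)" 2] by (simp add: ceiling_def)
  also have "\<dots> = int n + int ((n + 1) div 2)"
    by (simp add: zdiv_int[symmetric])
  finally show ?thesis .
qed

lemma qwin_pair_bound:
  assumes "0 < n" "a \<in> inputs n" "\<lceil>3 * real n / 2\<rceil> - 2 \<le> int m"
  shows "qwin m n {} a k"
proof -
  have progress: "\<exists>i<n. \<exists>j<n. i \<noteq> j \<and> pair_potential n (insert (answer b i j) A) < pair_potential n A \<and>
      (\<forall>c. 0 < l \<longrightarrow> pair_potential n (insert (answer b i j) A) < pair_potential n A)"
    if "admissible n A b" "\<not> determined n A" for A b l
    using pair_potential_progress[OF assms(1) that] answer_cases[of b] by metis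
  have "pair_potential n {} = \<lceil>3 * real n / 2\<rceil>"
    unfolding pair_potential_def ceiling_three_halves by simp
  with assms(3) have "pair_potential n {} \<le> int m + 2" by simp
  moreover have "admissible n {} a" using assms(2) unfolding admissible_def by simp
  ultimately show ?thesis
    using qwin_by_potential[where \<Phi> = "\<lambda>A a k. pair_potential n A"] pair_potential_ge_2[OF assms(1)] progress
    by blast
qed

definition separated :: "'a set \<Rightarrow> 'a set \<Rightarrow> ('a \<Rightarrow> real) \<Rightarrow> bool" where
  "separated U L a \<longleftrightarrow> (\<exists>w\<in>U \<inter> L. (\<forall>q\<in>L - U. a q < a w) \<and> (\<forall>p\<in>U - L. a w < a p))"

definition improving_query :: "'a set \<Rightarrow> 'a set \<Rightarrow> ('a \<Rightarrow> real) \<Rightarrow> 'a \<Rightarrow> 'a \<Rightarrow> bool" where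
  "improving_query U L a i j \<longleftrightarrow> i \<in> U \<union> L \<and> j \<in> U \<union> L \<and> a i < a j \<and>
     (i \<in> U - L \<or> j \<in> L - U \<or> separated U L a) \<and> \<not> separated (U - {i}) (L - {j}) a"

lemma separated_dual: "separated L U (\<lambda>x. - a x) \<longleftrightarrow> separated U L a"
  unfolding separated_def by (auto simp: Int_commute)

lemma improving_query_dual: "improving_query L U (\<lambda>x. - a x) j i \<longleftrightarrow> improving_query U L a i j"
  unfolding improving_query_def separated_dual by auto

lemma improving_query_two_common:
  assumes "finite U" "inj_on a (U \<inter> L)" "separated U L a" "2 \<le> card (U \<inter> L)"
  shows "\<exists>i j. improving_query U L a i j"
proof -
  from assms(4) obtain x y where "x \<in> U \<inter> L" "y \<in> U \<inter> L" "x \<noteq> y" by (rule card_ge_2_obtain)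
  have fin: "finite (U \<inter> L)" using assms(1) by simp
  obtain w1 where w1: "w1 \<in> U \<inter> L" "\<And>y. y \<in> U \<inter> L \<Longrightarrow> a w1 \<le> a y"
    using finite_obtain_arg_min[OF fin, of a] \<open>x \<in> U \<inter> L\<close> by blast
  obtain w2 where w2: "w2 \<in> U \<inter> L - {w1}" "\<And>y. y \<in> U \<inter> L - {w1} \<Longrightarrow> a w2 \<le> a y"
    using finite_obtain_arg_min[of "U \<inter> L - {w1}" a] fin \<open>x \<in> U \<inter> L\<close> \<open>y \<in> U \<inter> L\<close> \<open>x \<noteq> y\<close>
    by blast
  have "a w1 \<noteq> a w2" using w1(1) w2(1) inj_onD[OF assms(2)] by blast
  with w1(2)[of w2] w2(1) have "a w1 < a w2" by simp
  have "\<not> separated (U - {w1}) (L - {w2}) a"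
  proof
    assume "separated (U - {w1}) (L - {w2}) a"
    then obtain w where w: "w \<in> (U - {w1}) \<inter> (L - {w2})"
      and above: "\<forall>p\<in>(U - {w1}) - (L - {w2}). a w < a p"
      unfolding separated_def by blast
    have "w2 \<in> (U - {w1}) - (L - {w2})" using w2(1) by blast
    with above have "a w < a w2" by blast
    with w2(2)[of w] w show False by auto
  qed
  with w1(1) w2(1) \<open>a w1 < a w2\<close> assms(3) have "improving_query U L a w1 w2"
    unfolding improving_query_def by blast
  then show ?thesis by blast
qed

lemma improving_query_single_common:
  assumes "separated U L a" "U \<inter> L = {w}" "p \<in> U - L"
  shows "improving_query U L a w p"
proof -
  have "a w < a p" using assms unfolding separated_def by auto
  moreover have "(U - {w}) \<inter> (L - {p}) = {}" using assms(2) by blast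
  ultimately show ?thesis using assms unfolding improving_query_def separated_def by auto
qed

lemma improving_query_disjoint:
  assumes "U \<inter> L = {}" "inj_on a U" "2 \<le> card U"
  shows "\<exists>i j. improving_query U L a i j"
proof -
  from assms(3) obtain x y where xy: "x \<in> U" "y \<in> U" "x \<noteq> y" by (rule card_ge_2_obtain)
  then have "a x < a y \<or> a y < a x" using inj_onD[OF assms(2)] by (meson linorder_neqE)
  moreover have "improving_query U L a i j" if "i \<in> U" "j \<in> U" "a i < a j" for i j
    using that assms(1) unfolding improving_query_def separated_def by auto
  ultimately show ?thesis using xy by blast
qed

lemma improving_query_below_common:
  assumes "finite U" "inj_on a (U \<union> L)" "\<not> separated U L a"
    and "p \<in> U - L" "w \<in> U \<inter> L" "a p < a w"
  shows "\<exists>i j. improving_query U L a i j"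
proof -
  obtain p0 where p0: "p0 \<in> U - L" "\<And>y. y \<in> U - L \<Longrightarrow> a p0 \<le> a y"
    using finite_obtain_arg_min[of "U - L" a] assms(1,4) by blast
  define S where "S = {w \<in> U \<inter> L. a p0 < a w}"
  have "w \<in> S" using p0(2)[OF assms(4)] assms(5,6) unfolding S_def by simp
  moreover have "finite S" using assms(1) unfolding S_def by simp
  ultimately obtain w0 where w0: "w0 \<in> S" "\<And>y. y \<in> S \<Longrightarrow> a w0 \<le> a y"
    using finite_obtain_arg_min[of S a] by blast
  have "\<not> separated (U - {p0}) (L - {w0}) a"
  proof
    assume "separated (U - {p0}) (L - {w0}) a"
    then obtain w' where w': "w' \<in> (U - {p0}) \<inter> (L - {w0})"
      and below': "\<forall>q\<in>(L - {w0}) - (U - {p0}). a q < a w'"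
      and above': "\<forall>p\<in>(U - {p0}) - (L - {w0}). a w' < a p"
      unfolding separated_def by blast
    have "w0 \<in> (U - {p0}) - (L - {w0})" using w0(1) p0(1) unfolding S_def by auto
    with above' have "a w' < a w0" by blast
    with w0(2)[of w'] w' have "\<not> a p0 < a w'" unfolding S_def by auto
    moreover have "a w' \<noteq> a p0" using w' p0(1) inj_onD[OF assms(2)] by blast
    ultimately have "a w' < a p0" by simp
    moreover from assms(3) w' obtain x where
      "x \<in> L - U \<and> \<not> a x < a w' \<or> x \<in> U - L \<and> \<not> a w' < a x"
      unfolding separated_def by blast
    ultimately show False
      using below' p0 w0(1) unfolding S_def by fastforce
  qed
  with p0(1) w0(1) have "improving_query U L a p0 w0"
    unfolding improving_query_def S_def by blast
  then show ?thesis by blast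
qed

lemma ex_improving_query_dual:
  "(\<exists>i j. improving_query L U (\<lambda>x. - a x) i j) \<longleftrightarrow> (\<exists>i j. improving_query U L a i j)"
  using improving_query_dual[of L U a] by blast

lemma improving_query_if_separated:
  assumes "finite U" "inj_on a (U \<union> L)" "separated U L a" "2 \<le> card U \<or> 2 \<le> card L"
  shows "\<exists>i j. improving_query U L a i j"
proof (cases "2 \<le> card (U \<inter> L)")
  case True
  with assms(1-3) show ?thesis
    by (intro improving_query_two_common) (auto intro: inj_on_subset)
next
  case False
  from assms(3) obtain w where "w \<in> U \<inter> L" unfolding separated_def by blast
  with False assms(1) have single: "U \<inter> L = {w}"
    using card_le_Suc0_iff_eq[of "U \<inter> L"] by auto
  consider p where "p \<in> U - L" | q where "q \<in> L - U" | "U = {w}" "L = {w}"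
    using single by blast
  then show ?thesis
  proof cases
    case 1
    with improving_query_single_common[OF assms(3) single] show ?thesis by blast
  next
    case 2
    with single assms(3) have "improving_query L U (\<lambda>x. - a x) w q"
      by (intro improving_query_single_common) (auto simp: separated_dual)
    then show ?thesis using ex_improving_query_dual[of L U a] by blast
  next
    case 3
    with assms(4) show ?thesis by simp
  qed
qed

lemma improving_query_if_not_separated:
  assumes "finite U" "finite L" "inj_on a (U \<union> L)" "\<not> separated U L a" "2 \<le> card U \<or> 2 \<le> card L"
  shows "\<exists>i j. improving_query U L a i j"
proof -
  have inj_dual: "inj_on (\<lambda>x. - a x) (L \<union> U)" using assms(3) by (auto simp: inj_on_def)
  show ?thesis
  proof (cases "U \<inter> L = {}")
    case True
    from assms(5) show ?thesis
    proof
      assume "2 \<le> card U"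
      with True assms(3) show ?thesis
        by (intro improving_query_disjoint) (auto intro: inj_on_subset)
    next
      assume "2 \<le> card L"
      with True inj_dual have "\<exists>i j. improving_query L U (\<lambda>x. - a x) i j"
        by (intro improving_query_disjoint) (auto intro: inj_on_subset)
      then show ?thesis using ex_improving_query_dual[of L U a] by blast
    qed
  next
    case False
    then obtain w where w: "w \<in> U \<inter> L" by blast
    with assms(4) obtain x where x: "x \<in> L - U \<and> \<not> a x < a w \<or> x \<in> U - L \<and> \<not> a w < a x"
      unfolding separated_def by blast
    with w have "a x \<noteq> a w" using inj_onD[OF assms(3)] by blast
    with x consider "x \<in> L - U" "a w < a x" | "x \<in> U - L" "a x < a w" by fastforce
    then show ?thesis
    proof cases
      case 1
      with w assms(2,4) inj_dual have "\<exists>i j. improving_query L U (\<lambda>x. - a x) i j"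
        by (intro improving_query_below_common) (auto simp: separated_dual)
      then show ?thesis using ex_improving_query_dual[of L U a] by blast
    next
      case 2
      with w show ?thesis using improving_query_below_common[OF assms(1,3,4)] by blast
    qed
  qed
qed

lemma improving_query_exists:
  assumes "finite U" "finite L" "inj_on a (U \<union> L)" "2 \<le> card U \<or> 2 \<le> card L"
  shows "\<exists>i j. improving_query U L a i j"
  using improving_query_if_separated[OF assms(1,3) _ assms(4)]
    improving_query_if_not_separated[OF assms(1-3) _ assms(4)]
  by blast

definition chain_potential :: "nat \<Rightarrow> (nat \<times> nat) set \<Rightarrow> (nat \<Rightarrow> real) \<Rightarrow> int" where
  "chain_potential n A a = int (card (max_cands n A \<union> min_cands n A))
     + of_bool (separated (max_cands n A) (min_cands n A) a)"

lemma chain_potential_ge_2: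
  assumes "0 < n" "admissible n A a"
  shows "2 \<le> chain_potential n A a"
proof (cases "2 \<le> card (max_cands n A \<union> min_cands n A)")
  case False
  have "max_cands n A \<noteq> {}" "min_cands n A \<noteq> {}"
    using assms max_cands_nonempty min_cands_nonempty unfolding admissible_def by auto
  moreover obtain w where "w \<in> max_cands n A"
    using \<open>max_cands n A \<noteq> {}\<close> by blast
  moreover have "x = w" if "x \<in> max_cands n A \<union> min_cands n A" for x
    using False card_le_Suc0_iff_eq[of "max_cands n A \<union> min_cands n A"] that \<open>w \<in> max_cands n A\<close>
    by auto
  ultimately have "max_cands n A = {w}" "min_cands n A = {w}" by blast+
  then show ?thesis unfolding chain_potential_def separated_def by simp
qed (simp add: chain_potential_def)

lemma chain_potential_insert:
  assumes "improving_query (max_cands n A) (min_cands n A) a i j"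
  shows "chain_potential n (insert (i, j) A) a < chain_potential n A a"
    and "chain_potential n (insert (i, j) A) b \<le> chain_potential n A a"
proof -
  let ?U = "max_cands n A" and ?L = "min_cands n A"
  have "i < n" "j < n"
    using assms max_cands_subset[of n A] min_cands_subset[of n A]
    unfolding improving_query_def by auto
  then have U': "max_cands n (insert (i, j) A) = ?U - {i}"
    and L': "min_cands n (insert (i, j) A) = ?L - {j}"
    by (simp_all add: max_cands_insert min_cands_insert)
  have sub: "(?U - {i}) \<union> (?L - {j}) \<subseteq> ?U \<union> ?L" by blast
  have "card ((?U - {i}) \<union> (?L - {j})) < card (?U \<union> ?L) \<or> separated ?U ?L a"
  proof (cases "separated ?U ?L a")
    case False
    with assms have "i \<in> ?U - ?L \<or> j \<in> ?L - ?U" unfolding improving_query_def by blast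
    with sub have "(?U - {i}) \<union> (?L - {j}) \<subset> ?U \<union> ?L" by blast
    then show ?thesis by (intro disjI1 psubset_card_mono) simp
  qed simp
  moreover have "card ((?U - {i}) \<union> (?L - {j})) \<le> card (?U \<union> ?L)"
    using sub by (intro card_mono) simp_all
  moreover have "\<not> separated (?U - {i}) (?L - {j}) a"
    using assms unfolding improving_query_def by blast
  ultimately show "chain_potential n (insert (i, j) A) a < chain_potential n A a"
    and "chain_potential n (insert (i, j) A) b \<le> chain_potential n A a"
    unfolding chain_potential_def U' L' by auto
qed

lemma chain_potential_progress:
  assumes "0 < n" "admissible n A a" "\<not> determined n A"
  obtains i j where "i < n" "j < n" "a i < a j"
    "chain_potential n (insert (i, j) A) a < chain_potential n A a"
    "\<And>b. chain_potential n (insert (i, j) A) b \<le> chain_potential n A a"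
proof -
  have "a \<in> inputs n" using assms(2) unfolding admissible_def by simp
  have "inj_on a (max_cands n A \<union> min_cands n A)"
    by (rule inj_on_subset[OF inj_on_input[OF \<open>a \<in> inputs n\<close>]])
      (use max_cands_subset min_cands_subset in blast)
  from improving_query_exists[OF finite_max_cands finite_min_cands this not_determined_card_cands[OF assms]]
  obtain i j where ij: "improving_query (max_cands n A) (min_cands n A) a i j" by blast
  then have "i < n" "j < n" "a i < a j"
    using max_cands_subset[of n A] min_cands_subset[of n A]
    unfolding improving_query_def by auto
  from that[OF this chain_potential_insert[OF ij]] show thesis .
qed

lemma qwin_chain_bound:
  assumes "0 < n" "a \<in> inputs n" "int n + int k - 1 \<le> int m"
  shows "qwin m n {} a k"
proof -
  have progress: "\<exists>i<n. \<exists>j<n. i \<noteq> j \<and>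
      chain_potential n (insert (answer b i j) A) b + int l < chain_potential n A b + int l \<and>
      (\<forall>c. 0 < l \<longrightarrow> chain_potential n (insert (answer b i j) A) c + int (l - 1) < chain_potential n A b + int l)"
    if adm: "admissible n A b" and undetermined: "\<not> determined n A" for A b l
  proof -
    obtain i j where "i < n" "j < n" "b i < b j"
      and less: "chain_potential n (insert (i, j) A) b < chain_potential n A b"
      and le: "\<And>c. chain_potential n (insert (i, j) A) c \<le> chain_potential n A b"
      using chain_potential_progress[OF assms(1) adm undetermined] by blast
    have answer: "answer b i j = (i, j)" using \<open>b i < b j\<close> by (rule answer_less)
    have "chain_potential n (insert (answer b i j) A) c + int (l - 1) < chain_potential n A b + int l"
      if "0 < l" for c
      using le[of c] that answer by simp
    moreover have "chain_potential n (insert (answer b i j) A) b + int l < chain_potential n A b + int l"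
      using less answer by simp
    moreover have "i \<noteq> j" using \<open>b i < b j\<close> by auto
    ultimately show ?thesis using \<open>i < n\<close> \<open>j < n\<close> by blast
  qed
  have "separated {..<n} {..<n} a" unfolding separated_def using assms(1) by auto
  then have "chain_potential n {} a = int n + 1" unfolding chain_potential_def by simp
  with assms(3) have "chain_potential n {} a + int k \<le> int m + 2" by simp
  moreover have "admissible n {} a" using assms(2) unfolding admissible_def by simp
  moreover have "2 \<le> chain_potential n A b + int l" if "admissible n A b" for A b l
    using chain_potential_ge_2[OF assms(1) that] by simp
  ultimately show ?thesis
    using qwin_by_potential[where \<Phi> = "\<lambda>A a k. chain_potential n A a + int k"] progress
    by blast
qed

definition sandwiched :: "nat \<Rightarrow> (nat \<times> nat) set \<Rightarrow> (nat \<Rightarrow> real) \<Rightarrow> bool" where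
  "sandwiched n A a \<longleftrightarrow> (\<forall>x\<in>min_cands n A. \<forall>z\<in>max_cands n A.
     x \<notin> max_cands n A \<or> z \<notin> min_cands n A \<longrightarrow> a x < a z)"

definition lower_potential :: "nat \<Rightarrow> (nat \<times> nat) set \<Rightarrow> nat \<Rightarrow> int" where
  "lower_potential n A k = int (card (max_cands n A)) + int (card (min_cands n A))
     - int (card (max_cands n A \<inter> min_cands n A)) - 2
     + min (int k + 1) ((int (card (max_cands n A \<inter> min_cands n A)) + 1) div 2)"

lemma lower_potential_le_0:
  assumes "card (max_cands n A) = 1" "card (min_cands n A) = 1"
  shows "lower_potential n A k \<le> 0"
proof -
  have "card (max_cands n A \<inter> min_cands n A) \<le> 1"
    using assms(1) card_mono[of "max_cands n A" "max_cands n A \<inter> min_cands n A"] by simp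
  then consider "card (max_cands n A \<inter> min_cands n A) = 0" | "card (max_cands n A \<inter> min_cands n A) = 1"
    by linarith
  then show ?thesis using assms unfolding lower_potential_def by cases simp_all
qed

lemma sandwiched_insert:
  assumes "x < n" "y < n" "sandwiched n A a"
    and "x \<notin> max_cands n A \<inter> min_cands n A" "y \<notin> max_cands n A \<inter> min_cands n A"
  shows "sandwiched n (insert (x, y) A) a"
  using assms unfolding sandwiched_def max_cands_insert[OF assms(2)] min_cands_insert[OF assms(1)]
  by blast

(* x and y are the loser and the winner of the new answer: xU, yL say whether they are candidates,
   xF, yF whether they are untouched, and d, e are ceil(|F|/2) before and after the answer. *)
lemma lower_potential_insert_arith:
  fixes d e k :: int
  assumes "xU \<and> yL \<longrightarrow> xF \<and> yF" "xF \<longrightarrow> xU" "yF \<longrightarrow> yL"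
    and "d \<le> e + 1" "\<not> xF \<and> \<not> yF \<longrightarrow> e = d"
  shows "min (k + 1) d \<le> min (k + 1) e - of_bool xU - of_bool yL + of_bool xF + of_bool yF + 1"
    and "xF \<or> yF \<Longrightarrow>
      min (k + 2) d \<le> min (k + 1) e - of_bool xU - of_bool yL + of_bool xF + of_bool yF + 1"
  using assms by (cases xU; cases yL; cases xF; cases yF; simp; linarith)+

lemma lower_potential_insert:
  assumes "x < n" "y < n" "a x < a y" "sandwiched n A a"
  shows "lower_potential n A k \<le> lower_potential n (insert (x, y) A) k + 1"
    and "\<not> sandwiched n (insert (x, y) A) a \<Longrightarrow>
      lower_potential n A (Suc k) \<le> lower_potential n (insert (x, y) A) k + 1"
proof -
  let ?U = "max_cands n A" and ?L = "min_cands n A"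
  let ?F = "?U \<inter> ?L"
  define f where "f = int (card ?F)"
  define r :: int where "r = of_bool (x \<in> ?F) + of_bool (y \<in> ?F)"
  have "x \<noteq> y" using assms(3) by auto
  have both: "x \<in> ?U \<and> y \<in> ?L \<longrightarrow> x \<in> ?F \<and> y \<in> ?F"
    using assms(3,4) unfolding sandwiched_def by force
  have "r \<le> f"
  proof -
    have "card ({x, y} \<inter> ?F) \<le> card ?F" by (intro card_mono) auto
    moreover have "int (card ({x, y} \<inter> ?F)) = r"
      using \<open>x \<noteq> y\<close> unfolding r_def by (auto simp: Int_insert_left)
    ultimately show ?thesis unfolding f_def by linarith
  qed
  moreover have "0 \<le> r" "r \<le> 2" unfolding r_def by simp_all
  ultimately have "(f + 1) div 2 \<le> (f - r + 1) div 2 + 1" by presburger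
  moreover have "\<not> x \<in> ?F \<and> \<not> y \<in> ?F \<longrightarrow> (f - r + 1) div 2 = (f + 1) div 2"
    unfolding r_def by simp
  ultimately have step:
    "min (K + 1) ((f + 1) div 2) \<le> min (K + 1) ((f - r + 1) div 2) - of_bool (x \<in> ?U) - of_bool (y \<in> ?L) + r + 1"
    "x \<in> ?F \<or> y \<in> ?F \<Longrightarrow>
      min (K + 2) ((f + 1) div 2) \<le> min (K + 1) ((f - r + 1) div 2) - of_bool (x \<in> ?U) - of_bool (y \<in> ?L) + r + 1"
    for K
    using lower_potential_insert_arith[OF both] unfolding r_def by (simp_all add: add.assoc)
  have potentials: "lower_potential n A k' = int (card ?U) + int (card ?L) - f - 2 + min (int k' + 1) ((f + 1) div 2)"
    "lower_potential n (insert (x, y) A) k' = int (card ?U) - of_bool (x \<in> ?U) + (int (card ?L) - of_bool (y \<in> ?L))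
      - (f - r) - 2 + min (int k' + 1) ((f - r + 1) div 2)" for k'
    unfolding lower_potential_def card_cands_insert[OF assms(1,2) \<open>x \<noteq> y\<close>] f_def r_def by simp_all
  show "lower_potential n A k \<le> lower_potential n (insert (x, y) A) k + 1"
    using step(1)[of "int k"] unfolding potentials by linarith
  assume "\<not> sandwiched n (insert (x, y) A) a"
  with sandwiched_insert[OF assms(1,2,4)] have "x \<in> ?F \<or> y \<in> ?F" by blast
  with step(2)[of "int k"] show "lower_potential n A (Suc k) \<le> lower_potential n (insert (x, y) A) k + 1"
    unfolding potentials by (simp add: add.commute)
qed

lemma exists_sandwiched:
  assumes "admissible n A a"
  obtains b where "b \<in> inputs n" "consistent b A" "sandwiched n A b"
proof -
  let ?U = "max_cands n A" and ?L = "min_cands n A"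
  have a: "a \<in> inputs n" "consistent a A" "A \<subseteq> {..<n} \<times> {..<n}"
    using assms unfolding admissible_def by auto
  define g :: "nat \<Rightarrow> int" where "g x = of_bool (x \<in> ?U - ?L) - of_bool (x \<in> ?L - ?U)" for x
  obtain C :: real where C: "0 \<le> C" "(\<lambda>x. if x < n then a x + C * of_int (g x) else 0) \<in> inputs n"
    "\<And>x y. x < n \<Longrightarrow> y < n \<Longrightarrow> g x < g y \<Longrightarrow> a x + C * of_int (g x) < a y + C * of_int (g y)"
    using inputs_shift_by_levels[OF a(1)] by blast
  let ?b = "\<lambda>x. if x < n then a x + C * of_int (g x) else 0"
  have "consistent ?b A"
  proof (rule consistent_mono[OF a(2,3)])
    show "?b x \<le> a x" if "x < n" "x \<notin> ?U" for x
      using that C(1) unfolding g_def by simp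
    show "a y \<le> ?b y" if "y < n" "y \<notin> ?L" for y
      using that C(1) unfolding g_def by simp
  qed
  moreover have "sandwiched n A ?b"
    unfolding sandwiched_def
  proof (intro ballI impI)
    fix x z assume "x \<in> ?L" "z \<in> ?U" "x \<notin> ?U \<or> z \<notin> ?L"
    moreover have "x < n" "z < n"
      using \<open>x \<in> ?L\<close> \<open>z \<in> ?U\<close> max_cands_subset min_cands_subset by blast+
    ultimately show "?b x < ?b z" using C(3)[of x z] unfolding g_def by auto
  qed
  ultimately show thesis using that C(2) by blast
qed

definition split_count :: "nat \<Rightarrow> (nat \<times> nat) set \<Rightarrow> (nat \<Rightarrow> real) \<Rightarrow> real \<Rightarrow> nat" where
  "split_count n A a v = card {x \<in> max_cands n A. v \<le> a x} + card {y \<in> min_cands n A. a y \<le> v}"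

definition best_split :: "nat \<Rightarrow> (nat \<times> nat) set \<Rightarrow> (nat \<Rightarrow> real) \<Rightarrow> nat" where
  "best_split n A a = Max (split_count n A a ` a ` {..<n})"

lemma split_count_insert:
  assumes "x < n" "y < n" "a x < a y"
  shows "split_count n A a v \<le> split_count n (insert (x, y) A) a v + 1"
proof -
  let ?S = "{z \<in> max_cands n A. v \<le> a z}" and ?T = "{z \<in> min_cands n A. a z \<le> v}"
  have "{z \<in> max_cands n (insert (x, y) A). v \<le> a z} = ?S - {x}"
    "{z \<in> min_cands n (insert (x, y) A). a z \<le> v} = ?T - {y}"
    using max_cands_insert[OF assms(2)] min_cands_insert[OF assms(1)] by auto
  then have "split_count n (insert (x, y) A) a v = card (?S - {x}) + card (?T - {y})"
    unfolding split_count_def by simp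
  moreover have "x \<notin> ?S \<or> y \<notin> ?T" using assms(3) by auto
  ultimately show ?thesis
    unfolding split_count_def
    using card_le_card_Diff_singleton_Suc[of ?S x] card_le_card_Diff_singleton_Suc[of ?T y]
    by auto
qed

lemma best_split_insert:
  assumes "0 < n" "x < n" "y < n" "a x < a y"
  shows "best_split n A a \<le> best_split n (insert (x, y) A) a + 1"
proof -
  have "best_split n A a \<in> split_count n A a ` a ` {..<n}"
    unfolding best_split_def using assms(1) by (intro Max_in) auto
  then obtain v where "v \<in> a ` {..<n}" "best_split n A a = split_count n A a v" by blast
  moreover have "split_count n (insert (x, y) A) a v \<le> best_split n (insert (x, y) A) a"
    using \<open>v \<in> a ` {..<n}\<close> unfolding best_split_def by (intro Max_ge) auto
  ultimately show ?thesis using split_count_insert[OF assms(2-4), of A v] by linarith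
qed

lemma best_split_le_2:
  assumes "0 < n" "card (max_cands n A) = 1" "card (min_cands n A) = 1"
  shows "best_split n A a \<le> 2"
proof -
  have "split_count n A a v \<le> 2" for v
  proof -
    have "card {x \<in> max_cands n A. v \<le> a x} \<le> card (max_cands n A)"
      "card {y \<in> min_cands n A. a y \<le> v} \<le> card (min_cands n A)"
      by (intro card_mono; auto)+
    with assms(2,3) show ?thesis unfolding split_count_def by simp
  qed
  then show ?thesis unfolding best_split_def using assms(1) by (subst Max_le_iff) auto
qed

lemma lower_potential_le_best_split:
  assumes "0 < n" "admissible n A a" "sandwiched n A a"
  shows "lower_potential n A 0 \<le> int (best_split n A a) - 2"
proof -
  let ?U = "max_cands n A" and ?L = "min_cands n A"
  have "?L \<noteq> {}" using assms min_cands_nonempty unfolding admissible_def by blast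
  then obtain w where w: "w \<in> ?L" "\<And>y. y \<in> ?L \<Longrightarrow> a y \<le> a w"
    using finite_obtain_arg_max[of ?L a] by auto
  have above: "a w < a z" if "z \<in> ?U" "w \<notin> ?U \<or> z \<notin> ?L" for z
    using assms(3) w(1) that unfolding sandwiched_def by blast
  have w_max: "w \<in> ?U" if "c \<in> ?U \<inter> ?L" for c
    using above[of c] w(2)[of c] that by force
  have "(?U - ?L) \<union> (?U \<inter> {w}) \<subseteq> {x \<in> ?U. a w \<le> a x}"
    using above by (auto intro: less_imp_le)
  then have "card ((?U - ?L) \<union> (?U \<inter> {w})) \<le> card {x \<in> ?U. a w \<le> a x}"
    by (intro card_mono) auto
  moreover have "card ((?U - ?L) \<union> (?U \<inter> {w})) = card (?U - ?L) + card (?U \<inter> {w})"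
    using w(1) by (intro card_Un_disjoint) auto
  moreover have "card (?U - ?L) + card (?U \<inter> ?L) = card ?U"
    using card_Diff_subset_Int[of ?U ?L] card_mono[of ?U "?U \<inter> ?L"] by simp
  moreover have "min 1 ((int (card (?U \<inter> ?L)) + 1) div 2) \<le> int (card (?U \<inter> {w}))"
    using w_max by (cases "?U \<inter> ?L = {}") auto
  moreover have "{y \<in> ?L. a y \<le> a w} = ?L" using w by auto
  moreover have "split_count n A a (a w) \<le> best_split n A a"
  proof -
    have "w < n" using w(1) min_cands_subset by blast
    then show ?thesis unfolding best_split_def by (intro Max_ge) auto
  qed
  ultimately show ?thesis unfolding lower_potential_def split_count_def by simp
qed

definition adversary_potential :: "nat \<Rightarrow> (nat \<times> nat) set \<Rightarrow> (nat \<Rightarrow> real) \<Rightarrow> nat \<Rightarrow> int" where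
  "adversary_potential n A a k = (if k = 0 then int (best_split n A a) - 2 else lower_potential n A k)"

lemma lower_potential_le_adversary_potential:
  assumes "0 < n" "admissible n A a" "sandwiched n A a"
  shows "lower_potential n A k \<le> adversary_potential n A a k"
  using lower_potential_le_best_split[OF assms] unfolding adversary_potential_def by simp

lemma adversary_potential_le_0:
  assumes "0 < n" "admissible n A a" "determined n A"
  shows "adversary_potential n A a k \<le> 0"
  using best_split_le_2[OF assms(1)] lower_potential_le_0 single_cands_if_determined[OF assms]
  unfolding adversary_potential_def by simp

lemma adversary_response:
  assumes "0 < n" "k = 0 \<or> sandwiched n A a" "admissible n A a" "x < n" "y < n" "a x < a y"
  shows "(k = 0 \<or> sandwiched n (insert (x, y) A) a) \<and>
      adversary_potential n A a k \<le> adversary_potential n (insert (x, y) A) a k + 1 \<or>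
    0 < k \<and> (\<exists>b\<in>inputs n. b \<noteq> a \<and> consistent b (insert (x, y) A) \<and>
      (k - 1 = 0 \<or> sandwiched n (insert (x, y) A) b) \<and>
      adversary_potential n A a k \<le> adversary_potential n (insert (x, y) A) b (k - 1) + 1)"
proof (cases k)
  case 0
  have "int (best_split n A a) \<le> int (best_split n (insert (x, y) A) a) + 1"
    using best_split_insert[OF assms(1,4-6), of A] by linarith
  with 0 show ?thesis unfolding adversary_potential_def by simp
next
  case (Suc l)
  with assms(2) have sandwiched: "sandwiched n A a" by simp
  show ?thesis
  proof (cases "sandwiched n (insert (x, y) A) a")
    case True
    then show ?thesis
      using lower_potential_insert(1)[OF assms(4-6) sandwiched] Suc
      unfolding adversary_potential_def by simp
  next
    case False
    have adm: "admissible n (insert (x, y) A) a" using admissible_insert[OF assms(3-6)] .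
    obtain b where b: "b \<in> inputs n" "consistent b (insert (x, y) A)" "sandwiched n (insert (x, y) A) b"
      using exists_sandwiched[OF adm] by blast
    with False have "b \<noteq> a" by blast
    have "adversary_potential n A a k \<le> lower_potential n (insert (x, y) A) l + 1"
      using lower_potential_insert(2)[OF assms(4-6) sandwiched False] Suc
      unfolding adversary_potential_def by simp
    also have "\<dots> \<le> adversary_potential n (insert (x, y) A) b l + 1"
      using lower_potential_le_adversary_potential[OF assms(1) admissible_change[OF adm b(1,2)] b(3)]
      by simp
    finally show ?thesis using b \<open>b \<noteq> a\<close> Suc by auto
  qed
qed

lemma not_qwin_lower_bound:
  assumes "0 < n" "a \<in> inputs n" "int m < min (int n + int k - 1) (\<lceil>3 * real n / 2\<rceil> - 2)"
  shows "\<not> qwin m n {} a k"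
proof -
  have adm: "admissible n {} a" using assms(2) unfolding admissible_def by simp
  have sandwiched: "sandwiched n {} a" unfolding sandwiched_def by simp
  have "lower_potential n {} k = min (int n + int k - 1) (\<lceil>3 * real n / 2\<rceil> - 2)"
    unfolding lower_potential_def ceiling_three_halves by simp
  with lower_potential_le_adversary_potential[OF assms(1) adm sandwiched, of k] assms(3)
  have bound: "int m < adversary_potential n {} a k" by linarith
  have "adversary_potential n A b l \<le> 0"
    if "l = 0 \<or> sandwiched n A b" "admissible n A b" "determined n A" for A b l
    using adversary_potential_le_0[OF assms(1) that(2,3)] .
  note not_qwin = not_qwin_by_potential[where P = "\<lambda>A a k. k = 0 \<or> sandwiched n A a"
      and \<Psi> = "adversary_potential n", OF this adversary_response[OF assms(1)]]
  show ?thesis by (rule not_qwin) (use sandwiched adm bound in simp_all)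
qed

lemma D_eqI:
  assumes "0 \<le> V"
    and "\<And>m a. a \<in> inputs n \<Longrightarrow> V \<le> int m \<Longrightarrow> qwin m n {} a k"
    and "\<And>m a. a \<in> inputs n \<Longrightarrow> int m < V \<Longrightarrow> \<not> qwin m n {} a k"
  shows "int (D k n) = V"
proof -
  obtain a where a: "a \<in> inputs n" using inputs_nonempty by blast
  have "D k n = nat V"
    unfolding D_def
  proof (rule Least_equality)
    show "\<forall>a\<in>inputs n. qwin (nat V) n {} a k"
      using assms(1) assms(2)[of _ "nat V"] by simp
    show "nat V \<le> m" if "\<forall>a\<in>inputs n. qwin m n {} a k" for m
    proof (rule ccontr)
      assume "\<not> nat V \<le> m"
      then have "int m < V" by linarith
      with assms(3)[OF a] that a show False by blast
    qed
  qed
  with assms(1) show ?thesis by simp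
qed

theorem theorem1:
  fixes n k :: nat
  assumes "n \<ge> 1"
  shows "int (D k n) = min (int n + int k - 1) (\<lceil>3 * real n / 2\<rceil> - 2)"
proof (rule D_eqI)
  have "0 < n" using assms by simp
  then show "0 \<le> min (int n + int k - 1) (\<lceil>3 * real n / 2\<rceil> - 2)"
    unfolding ceiling_three_halves by simp
  show "qwin m n {} a k"
    if "a \<in> inputs n" "min (int n + int k - 1) (\<lceil>3 * real n / 2\<rceil> - 2) \<le> int m" for m a
    using that qwin_pair_bound[OF \<open>0 < n\<close>] qwin_chain_bound[OF \<open>0 < n\<close>]
    by (auto simp: min_le_iff_disj)
  show "\<not> qwin m n {} a k"
    if "a \<in> inputs n" "int m < min (int n + int k - 1) (\<lceil>3 * real n / 2\<rceil> - 2)" for m a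
    using not_qwin_lower_bound[OF \<open>0 < n\<close> that] .
qed

end
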